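(* Let $\Delta>0$, $\varepsilon\in(0,0.9]$, $\delta\in(0,1]$ and $k\ge1$ an integer. The mechanism that answers a real-valued query of sensitivity at most $\Delta$ by adding independent Laplacian noise with variance $8k\Delta^2\log(e+\varepsilon/\delta)/\varepsilon^2$ satisfies $(\varepsilon,\delta)$-differential privacy under $k$-fold adaptive composition. Moreover, the mean squared error achieved (summed over the $k$ query answers) is $O\big(k^2\Delta^2\log(e+\varepsilon/\delta)/\varepsilon^2\big)$.
   Context: Databases carry a symmetric neighbor relation $\sim$. A real-valued query $q$ has sensitivity $\max_{D\sim D'}|q(D)-q(D')|$. The Laplacian noise with scale $\beta>0$ has density $\frac1{2\beta}e^{-|x|/\beta}$ and variance $2\beta^2$; the mechanism outputs $q(D)+Z$ with $Z$ such noise, independent of everything else. $k$-fold adaptive composition with bit $b\in\{0,1\}$ unknown to the adversary: an adversary with internal randomness $R$, at each step $i=1,\dots,k$, chooses (as a function of $R$ and previous outputs) neighboring databases $D^{i,0}\sim D^{i,1}$ and a real-valued query $q_i$ of sensitivity at most $\Delta$, and receives $y_i=q_i(D^{i,b})+Z_i$ with fresh independent noise $Z_i$. The view is $V^b=(R,Y_1^b,\dots,Y_k^b)$; $(\varepsilon,\delta)$-differential privacy under composition means that for every adversary and every measurable set $S$ of views, $\mathbb P(V^0\in S)\le e^{\varepsilon}\mathbb P(V^1\in S)+\delta$ and symmetrically with $V^0,V^1$ swapped. *)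

theory Defs
  imports "HOL-Probability.Probability"
begin

definition laplace :: "real \<Rightarrow> real measure" where
  "laplace \<beta> = density lborel (\<lambda>x. ennreal (exp (- \<bar>x\<bar> / \<beta>) / (2 * \<beta>)))"

definition sensitivity_le :: "('db \<Rightarrow> 'db \<Rightarrow> bool) \<Rightarrow> ('db \<Rightarrow> real) \<Rightarrow> real \<Rightarrow> bool" where
  "sensitivity_le nb q \<Delta> \<longleftrightarrow> (\<forall>D D'. nb D D' \<longrightarrow> \<bar>q D - q D'\<bar> \<le> \<Delta>)"

definition chosen_val :: "'db \<times> 'db \<times> ('db \<Rightarrow> real) \<Rightarrow> bool \<Rightarrow> real" where
  "chosen_val c b = (case c of (D0, D1, q) \<Rightarrow> q (if b then D1 else D0))"

text \<open>Adversary: at step i, given its randomness r and the previous outputs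
  (an extensional function on {..<i}), chooses (D0, D1, q).\<close>
type_synonym ('r, 'db) adversary = "nat \<Rightarrow> 'r \<Rightarrow> (nat \<Rightarrow> real) \<Rightarrow> 'db \<times> 'db \<times> ('db \<Rightarrow> real)"

definition valid_adversary ::
  "('db \<Rightarrow> 'db \<Rightarrow> bool) \<Rightarrow> real \<Rightarrow> 'r measure \<Rightarrow> ('r, 'db) adversary \<Rightarrow> bool" where
  "valid_adversary nb \<Delta> MR A \<longleftrightarrow>
     (\<forall>i. \<forall>r\<in>space MR. \<forall>h\<in>space (PiM {..<i} (\<lambda>_. borel :: real measure)).
        (case A i r h of (D0, D1, q) \<Rightarrow> nb D0 D1 \<and> sensitivity_le nb q \<Delta>)) \<and>
     (\<forall>i b. (\<lambda>(r, h). chosen_val (A i r h) b)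
              \<in> borel_measurable (MR \<Otimes>\<^sub>M PiM {..<i} (\<lambda>_. borel :: real measure)))"

fun outs :: "('r, 'db) adversary \<Rightarrow> bool \<Rightarrow> 'r \<Rightarrow> (nat \<Rightarrow> real) \<Rightarrow> nat \<Rightarrow> (nat \<Rightarrow> real)" where
  "outs A b r z 0 = (\<lambda>_. undefined)"
| "outs A b r z (Suc i) =
     (let h = outs A b r z i in h(i := chosen_val (A i r h) b + z i))"

definition view :: "real measure \<Rightarrow> 'r measure \<Rightarrow> ('r, 'db) adversary \<Rightarrow> bool \<Rightarrow> nat
    \<Rightarrow> ('r \<times> (nat \<Rightarrow> real)) measure" where
  "view N MR A b k =
     distr (MR \<Otimes>\<^sub>M PiM {..<k} (\<lambda>_. N)) (MR \<Otimes>\<^sub>M PiM {..<k} (\<lambda>_. borel))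
       (\<lambda>(r, z). (r, outs A b r z k))"

text \<open>(eps, delta)-differential privacy under k-fold adaptive composition, for all
  adversaries whose internal randomness has type 'r.\<close>
definition adaptive_dp :: "('db \<Rightarrow> 'db \<Rightarrow> bool) \<Rightarrow> real \<Rightarrow> real measure \<Rightarrow> nat \<Rightarrow> real \<Rightarrow> real
    \<Rightarrow> 'r itself \<Rightarrow> bool" where
  "adaptive_dp nb \<Delta> N k \<epsilon> \<delta> (_ :: 'r itself) \<longleftrightarrow>
     (\<forall>(MR :: 'r measure) (A :: ('r, 'db) adversary).
        prob_space MR \<and> valid_adversary nb \<Delta> MR A \<longrightarrow>
        (\<forall>S \<in> sets (MR \<Otimes>\<^sub>M PiM {..<k} (\<lambda>_. borel)).
           measure (view N MR A False k) S \<le> exp \<epsilon> * measure (view N MR A True k) S + \<delta> \<and>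
           measure (view N MR A True k) S \<le> exp \<epsilon> * measure (view N MR A False k) S + \<delta>))"

definition comp_mse :: "real measure \<Rightarrow> 'r measure \<Rightarrow> ('r, 'db) adversary \<Rightarrow> bool \<Rightarrow> nat \<Rightarrow> ennreal" where
  "comp_mse N MR A b k =
     (\<integral>\<^sup>+ (r, z). ennreal (\<Sum>i<k. (outs A b r z k i - chosen_val (A i r (outs A b r z i)) b)\<^sup>2)
        \<partial>(MR \<Otimes>\<^sub>M PiM {..<k} (\<lambda>_. N)))"

end

theory Submission
  imports Defs
begin

text \<open>
  The privacy loss \<open>L\<close>, the log-likelihood ratio between the views under the two bits, is a sum
  over the \<open>k\<close> rounds of increments \<open>(\<bar>z + d\<bar> - \<bar>z\<bar>) / \<beta>\<close>, where \<open>z\<close> is the Laplace noise and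
  \<open>\<bar>d\<bar> \<le> \<Delta>\<close> the gap between the values of the chosen query on the two neighbouring databases;
  the view under one bit is the view under the other reweighted by \<open>exp (- L)\<close>. Each increment lies in \<open>[-c, c]\<close> for
  \<open>c = \<Delta> / \<beta>\<close> and has mean at most \<open>c\<^sup>2\<close>, so by Hoeffding's lemma, applied round by round,
  \<open>E exp (l L) \<le> exp (k (l c\<^sup>2 + l\<^sup>2 c\<^sup>2 / 2))\<close>. Integrating the pointwise inequality
  \<open>1 \<le> exp \<epsilon> exp (- L) + exp (- l \<epsilon>) / (e l) exp (l L)\<close> bounds the probability of any set of views
  under one bit by \<open>exp \<epsilon>\<close> times its probability under the other bit plus
  \<open>exp (- l \<epsilon>) / (e l) E exp (l L)\<close>, and the choice \<open>\<beta>\<^sup>2 = 4 k \<Delta>\<^sup>2 ln (e + \<epsilon> / \<delta>) / \<epsilon>\<^sup>2\<close>,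
  \<open>l = 4 ln (e + \<epsilon> / \<delta>) / \<epsilon>\<close> makes this error term at most \<open>\<delta>\<close>. The mean squared error is
  \<open>k\<close> times the noise variance \<open>2 \<beta>\<^sup>2\<close>.
\<close>

definition laplace_density :: "real \<Rightarrow> real \<Rightarrow> real" where
  "laplace_density \<beta> x = exp (- \<bar>x\<bar> / \<beta>) / (2 * \<beta>)"

text \<open>The privacy loss \<open>ln (p(t) / p(t + d))\<close> of Laplace noise of density \<open>p\<close> at a query gap \<open>d\<close>.\<close>
definition laplace_loss :: "real \<Rightarrow> real \<Rightarrow> real \<Rightarrow> real" where
  "laplace_loss \<beta> d t = (\<bar>t + d\<bar> - \<bar>t\<bar>) / \<beta>"

lemma laplace_eq_density: "laplace \<beta> = density lborel (\<lambda>x. ennreal (laplace_density \<beta> x))"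
  by (simp add: laplace_def laplace_density_def)

lemma sets_laplace [simp, measurable_cong]: "sets (laplace \<beta>) = sets borel"
  by (simp add: laplace_def)

lemma measurable_laplace_iff: "measurable M (laplace \<beta>) = measurable M borel"
  by (rule measurable_cong_sets) auto

lemma borel_measurable_laplace_density [measurable]: "laplace_density \<beta> \<in> borel_measurable borel"
  unfolding laplace_density_def by measurable

lemma borel_measurable_laplace_loss [measurable]: "laplace_loss \<beta> d \<in> borel_measurable borel"
  unfolding laplace_loss_def by measurable

lemma laplace_density_shift:
  "laplace_density \<beta> (x + d) = laplace_density \<beta> x * exp (- laplace_loss \<beta> d x)"
  by (simp add: laplace_density_def laplace_loss_def mult_exp_exp diff_divide_distrib)

lemma nn_integral_laplace_shift:
  assumes [measurable]: "g \<in> borel_measurable borel"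
  shows "(\<integral>\<^sup>+t. g (a + t) \<partial>laplace \<beta>)
       = (\<integral>\<^sup>+t. g (b + t) * ennreal (exp (- laplace_loss \<beta> (b - a) t)) \<partial>laplace \<beta>)"
proof -
  have shift: "ennreal (laplace_density \<beta> ((b - a) + 1 * s)) * g (a + ((b - a) + 1 * s))
             = ennreal (laplace_density \<beta> s) * (g (b + s) * ennreal (exp (- laplace_loss \<beta> (b - a) s)))" for s
    using laplace_density_shift[of \<beta> s "b - a"] by (simp add: add.commute ennreal_mult'' ac_simps)
  have "(\<integral>\<^sup>+t. g (a + t) \<partial>laplace \<beta>) = (\<integral>\<^sup>+t. ennreal (laplace_density \<beta> t) * g (a + t) \<partial>lborel)"
    unfolding laplace_eq_density by (subst nn_integral_density) auto
  also have "\<dots> = ennreal \<bar>1\<bar> * (\<integral>\<^sup>+s. ennreal (laplace_density \<beta> ((b - a) + 1 * s)) * g (a + ((b - a) + 1 * s)) \<partial>lborel)"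
    by (rule nn_integral_real_affine) auto
  also have "\<dots> = (\<integral>\<^sup>+t. g (b + t) * ennreal (exp (- laplace_loss \<beta> (b - a) t)) \<partial>laplace \<beta>)"
    unfolding laplace_eq_density shift by (subst nn_integral_density) auto
  finally show ?thesis .
qed

lemma nn_integral_lborel_even:
  fixes f :: "real \<Rightarrow> ennreal"
  assumes [measurable]: "f \<in> borel_measurable borel" and even: "\<And>x. f (- x) = f x"
  shows "(\<integral>\<^sup>+x. f x \<partial>lborel) = 2 * (\<integral>\<^sup>+x. f x * indicator {0<..} x \<partial>lborel)"
proof -
  have "(\<integral>\<^sup>+x. f x \<partial>lborel) = (\<integral>\<^sup>+x. f x * indicator {0<..} x + f x * indicator {..<0} x \<partial>lborel)"
    using AE_lborel_singleton[of 0]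
    by (intro nn_integral_cong_AE) (auto elim!: eventually_mono split: split_indicator)
  also have "\<dots> = (\<integral>\<^sup>+x. f x * indicator {0<..} x \<partial>lborel) + (\<integral>\<^sup>+x. f x * indicator {..<0} x \<partial>lborel)"
    by (rule nn_integral_add) auto
  also have "(\<integral>\<^sup>+x. f x * indicator {..<0} x \<partial>lborel)
           = (\<integral>\<^sup>+x. f (0 + (-1) * x) * indicator {..<0} (0 + (-1) * x) \<partial>lborel)"
    using nn_integral_real_affine[of "\<lambda>x. f x * indicator {..<0} x" "-1" 0] by simp
  also have "\<dots> = (\<integral>\<^sup>+x. f x * indicator {0<..} x \<partial>lborel)"
    by (intro nn_integral_cong) (simp add: even split: split_indicator)
  finally show ?thesis
    by (simp add: mult_2)
qed

lemma nn_integral_laplace_abs_power: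
  assumes "\<beta> > 0"
  shows "(\<integral>\<^sup>+x. ennreal (\<bar>x\<bar> ^ n) \<partial>laplace \<beta>) = ennreal (fact n * \<beta> ^ n)"
proof -
  have half_line: "2 * (ennreal (laplace_density \<beta> x * \<bar>x\<bar> ^ n) * indicator {0<..} x)
                 = ennreal (erlang_density 0 (1 / \<beta>) x * x ^ n)" if "x \<noteq> 0" for x
  proof (cases "x > 0")
    case True
    then have "2 * (laplace_density \<beta> x * \<bar>x\<bar> ^ n) = erlang_density 0 (1 / \<beta>) x * x ^ n"
      by (simp add: laplace_density_def erlang_density_def field_simps)
    then have "2 * ennreal (laplace_density \<beta> x * \<bar>x\<bar> ^ n) = ennreal (erlang_density 0 (1 / \<beta>) x * x ^ n)"
      by (metis ennreal_mult' ennreal_numeral zero_le_numeral)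
    then show ?thesis
      using True by simp
  qed (use that in \<open>simp add: erlang_density_def\<close>)
  have "(\<integral>\<^sup>+x. ennreal (\<bar>x\<bar> ^ n) \<partial>laplace \<beta>) = (\<integral>\<^sup>+x. ennreal (laplace_density \<beta> x * \<bar>x\<bar> ^ n) \<partial>lborel)"
    unfolding laplace_eq_density using assms
    by (subst nn_integral_density)
      (auto simp: laplace_density_def ennreal_mult[symmetric] intro!: nn_integral_cong)
  also have "\<dots> = (\<integral>\<^sup>+x. 2 * (ennreal (laplace_density \<beta> x * \<bar>x\<bar> ^ n) * indicator {0<..} x) \<partial>lborel)"
    by (subst nn_integral_lborel_even) (auto simp: laplace_density_def nn_integral_cmult)
  also have "\<dots> = (\<integral>\<^sup>+x. ennreal (erlang_density 0 (1 / \<beta>) x * x ^ n) \<partial>lborel)"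
    using AE_lborel_singleton[of 0] by (intro nn_integral_cong_AE) (auto elim!: eventually_mono simp: half_line)
  also have "\<dots> = ennreal (fact n * \<beta> ^ n)"
    using assms by (subst nn_integral_erlang_ith_moment) (auto simp: power_one_over divide_ennreal)
  finally show ?thesis .
qed

lemma prob_space_laplace: "\<beta> > 0 \<Longrightarrow> prob_space (laplace \<beta>)"
  using nn_integral_laplace_abs_power[of \<beta> 0] by (intro prob_spaceI) (simp add: nn_integral_const)

lemma add_exp_minus_le_square:
  fixes x :: real
  assumes "\<bar>x\<bar> \<le> 1"
  shows "x + exp (- x) - 1 \<le> x\<^sup>2"
proof (cases "x \<le> 0")
  case True
  then show ?thesis
    using exp_bound[of "- x"] assms by (simp add: power2_eq_square)
next
  case False
  have "exp (- x) = 1 / exp x"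
    by (simp add: exp_minus field_simps)
  also have "\<dots> \<le> 1 / (1 + x)"
    using False exp_ge_add_one_self[of x] by (intro divide_left_mono) auto
  also have "\<dots> \<le> 1 - x + x\<^sup>2"
  proof -
    have "1 \<le> (1 + x) * (1 - x + x\<^sup>2)"
      using False by (simp add: power2_eq_square algebra_simps power3_eq_cube[symmetric])
    then show ?thesis
      using False by (simp add: divide_le_eq mult.commute)
  qed
  finally show ?thesis
    by simp
qed

lemma nn_integral_laplace_exp_minus_loss:
  assumes "\<beta> > 0"
  shows "(\<integral>\<^sup>+t. ennreal (exp (- laplace_loss \<beta> d t)) \<partial>laplace \<beta>) = 1"
proof -
  interpret prob_space "laplace \<beta>"
    using assms by (rule prob_space_laplace)
  show ?thesis
    using nn_integral_laplace_shift[where g = "\<lambda>_. 1" and a = 0 and b = d] emeasure_space_1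
    by (simp add: nn_integral_const)
qed

lemma abs_laplace_loss_le: "\<beta> > 0 \<Longrightarrow> \<bar>laplace_loss \<beta> d t\<bar> \<le> \<bar>d\<bar> / \<beta>"
  unfolding laplace_loss_def by (simp add: abs_divide divide_right_mono abs_triangle_ineq3)

context
  fixes \<beta> d c :: real
  assumes \<beta>: "\<beta> > 0" and d: "\<bar>d\<bar> / \<beta> \<le> c" and c: "c \<le> 1"
begin

interpretation prob_space "laplace \<beta>"
  using \<beta> by (rule prob_space_laplace)

private lemma abs_laplace_loss_le_c: "\<bar>laplace_loss \<beta> d t\<bar> \<le> c"
  using abs_laplace_loss_le[OF \<beta>, of d t] d by linarith

text \<open>Since \<open>exp (- loss)\<close> has mean 1, the inequality \<open>x + exp (- x) - 1 \<le> x\<^sup>2\<close> bounds the mean loss.\<close>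
lemma expectation_laplace_loss_le: "expectation (laplace_loss \<beta> d) \<le> c\<^sup>2"
proof -
  have int_loss: "integrable (laplace \<beta>) (laplace_loss \<beta> d)"
    by (rule integrable_const_bound[where B = c]) (auto simp: abs_laplace_loss_le_c)
  have int_exp: "integrable (laplace \<beta>) (\<lambda>t. exp (- laplace_loss \<beta> d t))"
    using abs_laplace_loss_le_c
    by (intro integrable_const_bound[where B = "exp c"]) (auto simp: abs_le_iff)
  have "expectation (\<lambda>t. exp (- laplace_loss \<beta> d t)) = 1"
    using nn_integral_laplace_exp_minus_loss[OF \<beta>, of d]
    by (subst (asm) nn_integral_eq_integral[OF int_exp]) auto
  then have "expectation (laplace_loss \<beta> d)
           = expectation (\<lambda>t. laplace_loss \<beta> d t + exp (- laplace_loss \<beta> d t) - 1)"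
    using int_loss int_exp by (simp add: prob_space[simplified])
  also have "\<dots> \<le> expectation (\<lambda>_. c\<^sup>2)"
  proof (rule integral_mono)
    show "integrable (laplace \<beta>) (\<lambda>t. laplace_loss \<beta> d t + exp (- laplace_loss \<beta> d t) - 1)"
      using int_loss int_exp by auto
    fix t
    have "laplace_loss \<beta> d t + exp (- laplace_loss \<beta> d t) - 1 \<le> (laplace_loss \<beta> d t)\<^sup>2"
      using abs_laplace_loss_le_c[of t] c by (intro add_exp_minus_le_square) simp
    also have "\<dots> \<le> c\<^sup>2"
      using abs_laplace_loss_le_c[of t] by (metis abs_ge_zero power2_abs power_mono)
    finally show "laplace_loss \<beta> d t + exp (- laplace_loss \<beta> d t) - 1 \<le> c\<^sup>2" .
  qed auto
  finally show ?thesis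
    by (simp add: prob_space[simplified])
qed

lemma nn_integral_exp_laplace_loss_le:
  assumes "l > 0"
  shows "(\<integral>\<^sup>+t. ennreal (exp (l * laplace_loss \<beta> d t)) \<partial>laplace \<beta>) \<le> ennreal (exp (l * c\<^sup>2 + l\<^sup>2 * c\<^sup>2 / 2))"
proof -
  interpret interval_bounded_random_variable "laplace \<beta>" "laplace_loss \<beta> d" "- c" c
  proof
    show "AE t in laplace \<beta>. laplace_loss \<beta> d t \<in> {- c..c}"
      using abs_laplace_loss_le_c by (intro AE_I2) (metis abs_le_iff atLeastAtMost_iff minus_le_iff)
  qed simp
  let ?\<mu> = "expectation (laplace_loss \<beta> d)"
  have "(\<integral>\<^sup>+t. ennreal (exp (l * laplace_loss \<beta> d t)) \<partial>laplace \<beta>)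
      = (\<integral>\<^sup>+t. ennreal (exp (l * ?\<mu>)) * ennreal (exp (l * (laplace_loss \<beta> d t - ?\<mu>))) \<partial>laplace \<beta>)"
    by (intro nn_integral_cong) (simp add: ennreal_mult[symmetric] exp_add[symmetric] right_diff_distrib)
  also have "\<dots> = ennreal (exp (l * ?\<mu>)) * (\<integral>\<^sup>+t. ennreal (exp (l * (laplace_loss \<beta> d t - ?\<mu>))) \<partial>laplace \<beta>)"
    by (rule nn_integral_cmult) auto
  also have "\<dots> \<le> ennreal (exp (l * ?\<mu>)) * ennreal (exp (l\<^sup>2 * (c - - c)\<^sup>2 / 8))"
    using Hoeffdings_lemma_nn_integral[OF assms] by (intro mult_left_mono) auto
  also have "\<dots> = ennreal (exp (l * ?\<mu> + l\<^sup>2 * c\<^sup>2 / 2))"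
    by (simp add: ennreal_mult[symmetric] exp_add power2_eq_square algebra_simps)
  also have "\<dots> \<le> ennreal (exp (l * c\<^sup>2 + l\<^sup>2 * c\<^sup>2 / 2))"
    using expectation_laplace_loss_le assms by (intro ennreal_leI) simp
  finally show ?thesis .
qed

end

abbreviation histories :: "nat \<Rightarrow> (nat \<Rightarrow> real) measure" where
  "histories n \<equiv> PiM {..<n} (\<lambda>_. borel)"

abbreviation laplace_noise :: "real \<Rightarrow> nat \<Rightarrow> (nat \<Rightarrow> real) measure" where
  "laplace_noise \<beta> n \<equiv> PiM {..<n} (\<lambda>_. laplace \<beta>)"

lemma sets_laplace_noise: "sets (laplace_noise \<beta> n) = sets (histories n)"
  by (rule sets_PiM_cong) auto

lemma prob_space_laplace_noise: "\<beta> > 0 \<Longrightarrow> prob_space (laplace_noise \<beta> n)"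
  by (simp add: prob_space_PiM prob_space_laplace)

lemma product_sigma_finite_laplace: "\<beta> > 0 \<Longrightarrow> product_sigma_finite (\<lambda>_. laplace \<beta>)"
  by (simp add: product_sigma_finite_def prob_space_imp_sigma_finite prob_space_laplace)

lemma nn_integral_PiM_lessThan_Suc:
  assumes "product_sigma_finite M" and "f \<in> borel_measurable (PiM {..<Suc k} M)"
  shows "(\<integral>\<^sup>+z. f z \<partial>PiM {..<Suc k} M) = (\<integral>\<^sup>+z. (\<integral>\<^sup>+t. f (z(k := t)) \<partial>M k) \<partial>PiM {..<k} M)"
proof -
  have "{..<Suc k} = insert k {..<k}"
    by auto
  then show ?thesis
    using product_sigma_finite.product_nn_integral_insert[OF assms(1), of "{..<k}" k f] assms(2) by simp
qed

lemma outs_in_extensional: "outs A b r z i \<in> extensional {..<i}"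
  by (induction i) (auto simp: Let_def extensional_def)

lemma outs_in_space: "outs A b r z i \<in> space (histories i)"
  using outs_in_extensional by (auto simp: space_PiM PiE_def)

lemma outs_cong: "(\<And>j. j < i \<Longrightarrow> z j = z' j) \<Longrightarrow> outs A b r z i = outs A b r z' i"
  by (induction i) (auto simp: Let_def)

lemma outs_nth: "i < n \<Longrightarrow> outs A b r z n i = chosen_val (A i r (outs A b r z i)) b + z i"
  by (induction n) (auto simp: Let_def less_Suc_eq)

lemma outs_fun_upd_Suc:
  "outs A b r (z(k := t)) (Suc k) = (outs A b r z k)(k := chosen_val (A k r (outs A b r z k)) b + t)"
proof -
  have "outs A b r (z(k := t)) k = outs A b r z k"
    by (rule outs_cong) simp
  then show ?thesis
    by (simp add: Let_def)
qed

lemma measurable_fun_upd_histories: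
  assumes f: "f \<in> measurable M (histories k)" and x: "x \<in> borel_measurable M"
  shows "(\<lambda>\<omega>. (f \<omega>)(k := x \<omega>)) \<in> measurable M (histories (Suc k))"
proof (rule measurable_PiM_single')
  fix j assume "j \<in> {..<Suc k}"
  then show "(\<lambda>\<omega>. ((f \<omega>)(k := x \<omega>)) j) \<in> borel_measurable M"
    using x measurable_comp[OF f measurable_component_singleton[of j "{..<k}" "\<lambda>_. borel"]]
    by (cases "j = k") (auto simp: comp_def)
next
  show "(\<lambda>\<omega>. (f \<omega>)(k := x \<omega>)) \<in> space M \<rightarrow> (\<Pi>\<^sub>E j\<in>{..<Suc k}. space borel)"
    using measurable_space[OF f] by (auto simp: space_PiM PiE_def extensional_def)
qed

lemma measurable_chosen_val:
  assumes "valid_adversary nb \<Delta> MR A"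
    and "(\<lambda>\<omega>. (R \<omega>, H \<omega>)) \<in> measurable M (MR \<Otimes>\<^sub>M histories i)"
  shows "(\<lambda>\<omega>. chosen_val (A i (R \<omega>) (H \<omega>)) b) \<in> borel_measurable M"
proof -
  have "(\<lambda>(r, h). chosen_val (A i r h) b) \<in> borel_measurable (MR \<Otimes>\<^sub>M histories i)"
    using assms(1) unfolding valid_adversary_def by blast
  from measurable_comp[OF assms(2) this] show ?thesis
    by (simp add: comp_def)
qed

lemma measurable_outs:
  assumes "valid_adversary nb \<Delta> MR A" and "i \<le> n"
  shows "(\<lambda>(r, z). outs A b r z i) \<in> measurable (MR \<Otimes>\<^sub>M histories n) (histories i)"
  using assms(2)
proof (induction i)
  case 0
  then show ?case
    by (auto intro!: measurable_const simp: space_PiM)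
next
  case (Suc i)
  then have IH: "(\<lambda>\<omega>. outs A b (fst \<omega>) (snd \<omega>) i) \<in> measurable (MR \<Otimes>\<^sub>M histories n) (histories i)"
    by (simp add: split_beta')
  have "(\<lambda>\<omega>. chosen_val (A i (fst \<omega>) (outs A b (fst \<omega>) (snd \<omega>) i)) b) \<in> borel_measurable (MR \<Otimes>\<^sub>M histories n)"
    using IH by (intro measurable_chosen_val[OF assms(1)]) simp
  moreover have "(\<lambda>\<omega>. snd \<omega> i) \<in> borel_measurable (MR \<Otimes>\<^sub>M histories n)"
    using Suc.prems by simp
  ultimately have "(\<lambda>\<omega>. (outs A b (fst \<omega>) (snd \<omega>) i)(i := chosen_val (A i (fst \<omega>) (outs A b (fst \<omega>) (snd \<omega>) i)) b + snd \<omega> i))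
      \<in> measurable (MR \<Otimes>\<^sub>M histories n) (histories (Suc i))"
    by (intro measurable_fun_upd_histories[OF IH] borel_measurable_add)
  then show ?case
    by (simp only: outs.simps Let_def split_beta')
qed

definition query_gap :: "('r, 'db) adversary \<Rightarrow> bool \<Rightarrow> 'r \<Rightarrow> (nat \<Rightarrow> real) \<Rightarrow> nat \<Rightarrow> real" where
  "query_gap A b r h i = chosen_val (A i r h) b - chosen_val (A i r h) (\<not> b)"

text \<open>The log-likelihood ratio of the view under bit \<open>b\<close> against the view under \<open>\<not> b\<close>,
  as a function of the noise \<open>z\<close> that produced the view under \<open>b\<close>.\<close>
definition privacy_loss :: "real \<Rightarrow> ('r, 'db) adversary \<Rightarrow> bool \<Rightarrow> 'r \<Rightarrow> (nat \<Rightarrow> real) \<Rightarrow> nat \<Rightarrow> real" where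
  "privacy_loss \<beta> A b r z k = (\<Sum>i<k. laplace_loss \<beta> (query_gap A b r (outs A b r z i) i) (z i))"

lemma privacy_loss_fun_upd_Suc:
  "privacy_loss \<beta> A b r (z(k := t)) (Suc k)
     = privacy_loss \<beta> A b r z k + laplace_loss \<beta> (query_gap A b r (outs A b r z k) k) t"
proof -
  have "outs A b r (z(k := t)) i = outs A b r z i" if "i \<le> k" for i
    using that by (intro outs_cong) simp
  then show ?thesis
    unfolding privacy_loss_def by (auto intro!: sum.cong)
qed

lemma abs_query_gap_le:
  assumes "valid_adversary nb \<Delta> MR A" and "r \<in> space MR" and "h \<in> space (histories i)"
  shows "\<bar>query_gap A b r h i\<bar> \<le> \<Delta>"
proof -
  obtain D0 D1 q where A: "A i r h = (D0, D1, q)"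
    by (metis prod_cases3)
  then have "nb D0 D1 \<and> sensitivity_le nb q \<Delta>"
    using assms unfolding valid_adversary_def by (metis case_prod_conv)
  then have "\<bar>q D0 - q D1\<bar> \<le> \<Delta>"
    unfolding sensitivity_le_def by blast
  then show ?thesis
    using A by (cases b) (auto simp: query_gap_def chosen_val_def abs_minus_commute)
qed

lemma measurable_privacy_loss:
  assumes "valid_adversary nb \<Delta> MR A" and "k \<le> n"
  shows "(\<lambda>(r, z). privacy_loss \<beta> A b r z k) \<in> borel_measurable (MR \<Otimes>\<^sub>M histories n)"
proof -
  have "(\<lambda>\<omega>. laplace_loss \<beta> (query_gap A b (fst \<omega>) (outs A b (fst \<omega>) (snd \<omega>) i) i) (snd \<omega> i))
          \<in> borel_measurable (MR \<Otimes>\<^sub>M histories n)" if "i < k" for i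
  proof -
    have outs: "(\<lambda>\<omega>. outs A b (fst \<omega>) (snd \<omega>) i) \<in> measurable (MR \<Otimes>\<^sub>M histories n) (histories i)"
      using measurable_outs[OF assms(1), of i n] that assms(2) by (simp add: split_beta')
    have "(\<lambda>\<omega>. chosen_val (A i (fst \<omega>) (outs A b (fst \<omega>) (snd \<omega>) i)) c) \<in> borel_measurable (MR \<Otimes>\<^sub>M histories n)" for c
      using outs by (intro measurable_chosen_val[OF assms(1)]) simp
    moreover have "(\<lambda>\<omega>. snd \<omega> i) \<in> borel_measurable (MR \<Otimes>\<^sub>M histories n)"
      using that assms(2) by simp
    ultimately show ?thesis
      unfolding laplace_loss_def query_gap_def by measurable
  qed
  then show ?thesis
    unfolding privacy_loss_def by (auto simp: split_beta' intro!: borel_measurable_sum)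
qed

lemma measurable_outs_section:
  assumes "valid_adversary nb \<Delta> MR A" and "r \<in> space MR" and "i \<le> n"
  shows "(\<lambda>z. outs A b r z i) \<in> measurable (laplace_noise \<beta> n) (histories i)"
  using measurable_Pair2[OF measurable_outs[OF assms(1,3)] assms(2)]
  by (simp add: measurable_cong_sets[OF sets_laplace_noise refl])

lemma measurable_privacy_loss_section:
  assumes "valid_adversary nb \<Delta> MR A" and "r \<in> space MR" and "k \<le> n"
  shows "(\<lambda>z. privacy_loss \<beta> A b r z k) \<in> borel_measurable (laplace_noise \<beta>' n)"
  using measurable_Pair2[OF measurable_privacy_loss[OF assms(1,3)] assms(2)]
  by (simp add: measurable_cong_sets[OF sets_laplace_noise refl])

lemma measurable_fun_upd_section:
  assumes "g \<in> borel_measurable (histories (Suc k))" and "h \<in> space (histories k)"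
  shows "(\<lambda>t. g (h(k := t))) \<in> borel_measurable borel"
proof -
  have "(\<lambda>t. h(k := t)) \<in> measurable borel (histories (Suc k))"
    using assms(2) by (intro measurable_fun_upd_histories) auto
  from measurable_comp[OF this assms(1)] show ?thesis
    by (simp add: comp_def)
qed

lemma measurable_nn_integral_next_output:
  assumes valid: "valid_adversary nb \<Delta> MR A" and "\<beta> > 0" and "r \<in> space MR"
    and g: "g \<in> borel_measurable (histories (Suc k))"
  shows "(\<lambda>h. \<integral>\<^sup>+t. g (h(k := chosen_val (A k r h) b + t)) \<partial>laplace \<beta>) \<in> borel_measurable (histories k)"
proof -
  interpret laplace: prob_space "laplace \<beta>"
    using \<open>\<beta> > 0\<close> by (rule prob_space_laplace)
  have "(\<lambda>\<omega>. chosen_val (A k r (fst \<omega>)) b) \<in> borel_measurable (histories k \<Otimes>\<^sub>M laplace \<beta>)"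
    using \<open>r \<in> space MR\<close> by (intro measurable_chosen_val[OF valid]) auto
  then have "(\<lambda>\<omega>. (fst \<omega>)(k := chosen_val (A k r (fst \<omega>)) b + snd \<omega>))
      \<in> measurable (histories k \<Otimes>\<^sub>M laplace \<beta>) (histories (Suc k))"
    by (intro measurable_fun_upd_histories borel_measurable_add) (auto simp: measurable_laplace_iff)
  from measurable_comp[OF this g]
  have "(\<lambda>(h, t). g (h(k := chosen_val (A k r h) b + t))) \<in> borel_measurable (histories k \<Otimes>\<^sub>M laplace \<beta>)"
    by (simp add: comp_def split_beta')
  then show ?thesis
    by (rule laplace.borel_measurable_nn_integral)
qed

lemma nn_integral_next_output_flip_bit:
  fixes A :: "('r, 'db) adversary" and b r z
  assumes g: "g \<in> borel_measurable (histories (Suc k))"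
  defines "h \<equiv> outs A b r z k"
  shows "(\<integral>\<^sup>+t. g (h(k := chosen_val (A k r h) (\<not> b) + t)) \<partial>laplace \<beta>) * ennreal (exp (- privacy_loss \<beta> A b r z k))
       = (\<integral>\<^sup>+t. g (outs A b r (z(k := t)) (Suc k)) * ennreal (exp (- privacy_loss \<beta> A b r (z(k := t)) (Suc k))) \<partial>laplace \<beta>)"
proof -
  let ?w = "\<lambda>t. ennreal (exp (- laplace_loss \<beta> (query_gap A b r h k) t))"
  have g_section [measurable]: "(\<lambda>t. g (h(k := t))) \<in> borel_measurable borel"
    using g outs_in_space unfolding h_def by (rule measurable_fun_upd_section)
  have "(\<integral>\<^sup>+t. g (h(k := chosen_val (A k r h) (\<not> b) + t)) \<partial>laplace \<beta>)
      = (\<integral>\<^sup>+t. g (h(k := chosen_val (A k r h) b + t)) * ?w t \<partial>laplace \<beta>)"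
    unfolding query_gap_def by (rule nn_integral_laplace_shift[OF g_section])
  moreover have "(\<lambda>t. g (h(k := chosen_val (A k r h) b + t)) * ?w t) \<in> borel_measurable (laplace \<beta>)"
    by (simp add: measurable_laplace_iff)
  ultimately have "(\<integral>\<^sup>+t. g (h(k := chosen_val (A k r h) (\<not> b) + t)) \<partial>laplace \<beta>) * ennreal (exp (- privacy_loss \<beta> A b r z k))
      = (\<integral>\<^sup>+t. g (h(k := chosen_val (A k r h) b + t)) * ?w t * ennreal (exp (- privacy_loss \<beta> A b r z k)) \<partial>laplace \<beta>)"
    by (simp add: nn_integral_multc)
  then show ?thesis
    by (simp del: outs.simps add: h_def outs_fun_upd_Suc privacy_loss_fun_upd_Suc ennreal_mult[symmetric]
        mult_exp_exp mult.assoc minus_diff_commute)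
qed

lemma nn_integral_outs_flip_bit:
  assumes valid: "valid_adversary nb \<Delta> MR A" and "\<beta> > 0" and r: "r \<in> space MR"
    and "g \<in> borel_measurable (histories k)"
  shows "(\<integral>\<^sup>+z. g (outs A (\<not> b) r z k) \<partial>laplace_noise \<beta> k)
       = (\<integral>\<^sup>+z. g (outs A b r z k) * ennreal (exp (- privacy_loss \<beta> A b r z k)) \<partial>laplace_noise \<beta> k)"
  using assms(4)
proof (induction k arbitrary: g)
  case 0
  then show ?case
    by (simp add: privacy_loss_def)
next
  case (Suc k)
  note product = product_sigma_finite_laplace[OF \<open>\<beta> > 0\<close>]
  define G where "G h = (\<integral>\<^sup>+t. g (h(k := chosen_val (A k r h) (\<not> b) + t)) \<partial>laplace \<beta>)" for h
  have "G \<in> borel_measurable (histories k)"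
    unfolding G_def[abs_def] using valid \<open>\<beta> > 0\<close> r Suc.prems by (rule measurable_nn_integral_next_output)
  note outs_b [measurable] = measurable_comp[OF measurable_outs_section[OF valid r order_refl] Suc.prems, unfolded comp_def]
  note measurable_privacy_loss_section[OF valid r order_refl, measurable]
  have "(\<integral>\<^sup>+z. g (outs A (\<not> b) r z (Suc k)) \<partial>laplace_noise \<beta> (Suc k))
      = (\<integral>\<^sup>+z. (\<integral>\<^sup>+t. g (outs A (\<not> b) r (z(k := t)) (Suc k)) \<partial>laplace \<beta>) \<partial>laplace_noise \<beta> k)"
    by (rule nn_integral_PiM_lessThan_Suc[OF product]) measurable
  also have "\<dots> = (\<integral>\<^sup>+z. G (outs A (\<not> b) r z k) \<partial>laplace_noise \<beta> k)"
    by (simp del: outs.simps add: outs_fun_upd_Suc G_def)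
  also have "\<dots> = (\<integral>\<^sup>+z. G (outs A b r z k) * ennreal (exp (- privacy_loss \<beta> A b r z k)) \<partial>laplace_noise \<beta> k)"
    by (rule Suc.IH[OF \<open>G \<in> borel_measurable (histories k)\<close>])
  also have "\<dots> = (\<integral>\<^sup>+z. (\<integral>\<^sup>+t. g (outs A b r (z(k := t)) (Suc k))
                      * ennreal (exp (- privacy_loss \<beta> A b r (z(k := t)) (Suc k))) \<partial>laplace \<beta>) \<partial>laplace_noise \<beta> k)"
    unfolding G_def by (simp only: nn_integral_next_output_flip_bit[OF Suc.prems])
  also have "\<dots> = (\<integral>\<^sup>+z. g (outs A b r z (Suc k)) * ennreal (exp (- privacy_loss \<beta> A b r z (Suc k))) \<partial>laplace_noise \<beta> (Suc k))"
    by (rule nn_integral_PiM_lessThan_Suc[OF product, symmetric]) measurable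
  finally show ?case .
qed

lemma nn_integral_exp_privacy_loss_fun_upd_le:
  assumes valid: "valid_adversary nb \<Delta> MR A" and "\<beta> > 0" and r: "r \<in> space MR"
    and "\<Delta> / \<beta> \<le> 1" and "l > 0"
  shows "(\<integral>\<^sup>+t. ennreal (exp (l * privacy_loss \<beta> A b r (z(k := t)) (Suc k))) \<partial>laplace \<beta>)
      \<le> ennreal (exp (l * privacy_loss \<beta> A b r z k)) * ennreal (exp (l * (\<Delta> / \<beta>)\<^sup>2 + l\<^sup>2 * (\<Delta> / \<beta>)\<^sup>2 / 2))"
proof -
  let ?d = "query_gap A b r (outs A b r z k) k"
  have "\<bar>?d\<bar> / \<beta> \<le> \<Delta> / \<beta>"
    using abs_query_gap_le[OF valid r outs_in_space[of A b r z k]] \<open>\<beta> > 0\<close> by (simp add: divide_right_mono)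
  then have "(\<integral>\<^sup>+t. ennreal (exp (l * laplace_loss \<beta> ?d t)) \<partial>laplace \<beta>)
      \<le> ennreal (exp (l * (\<Delta> / \<beta>)\<^sup>2 + l\<^sup>2 * (\<Delta> / \<beta>)\<^sup>2 / 2))"
    using \<open>\<Delta> / \<beta> \<le> 1\<close> \<open>l > 0\<close> by (rule nn_integral_exp_laplace_loss_le[OF \<open>\<beta> > 0\<close>])
  moreover have "(\<integral>\<^sup>+t. ennreal (exp (l * privacy_loss \<beta> A b r (z(k := t)) (Suc k))) \<partial>laplace \<beta>)
      = ennreal (exp (l * privacy_loss \<beta> A b r z k)) * (\<integral>\<^sup>+t. ennreal (exp (l * laplace_loss \<beta> ?d t)) \<partial>laplace \<beta>)"
    by (subst nn_integral_cmult[symmetric])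
      (auto simp: measurable_laplace_iff privacy_loss_fun_upd_Suc distrib_left exp_add ennreal_mult
            intro!: nn_integral_cong)
  ultimately show ?thesis
    by (simp add: mult_left_mono)
qed

lemma nn_integral_exp_privacy_loss_le:
  assumes valid: "valid_adversary nb \<Delta> MR A" and "\<beta> > 0" and r: "r \<in> space MR"
    and "\<Delta> / \<beta> \<le> 1" and "l > 0"
  shows "(\<integral>\<^sup>+z. ennreal (exp (l * privacy_loss \<beta> A b r z k)) \<partial>laplace_noise \<beta> k)
           \<le> ennreal (exp (l * (\<Delta> / \<beta>)\<^sup>2 + l\<^sup>2 * (\<Delta> / \<beta>)\<^sup>2 / 2)) ^ k"
proof (induction k)
  case 0
  interpret prob_space "laplace_noise \<beta> 0"
    using \<open>\<beta> > 0\<close> by (rule prob_space_laplace_noise)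
  show ?case
    using emeasure_space_1 by (simp add: privacy_loss_def nn_integral_const)
next
  case (Suc k)
  define M where "M = ennreal (exp (l * (\<Delta> / \<beta>)\<^sup>2 + l\<^sup>2 * (\<Delta> / \<beta>)\<^sup>2 / 2))"
  note measurable_privacy_loss_section[OF valid r order_refl, measurable]
  have "(\<integral>\<^sup>+z. ennreal (exp (l * privacy_loss \<beta> A b r z (Suc k))) \<partial>laplace_noise \<beta> (Suc k))
      = (\<integral>\<^sup>+z. (\<integral>\<^sup>+t. ennreal (exp (l * privacy_loss \<beta> A b r (z(k := t)) (Suc k))) \<partial>laplace \<beta>) \<partial>laplace_noise \<beta> k)"
    by (rule nn_integral_PiM_lessThan_Suc[OF product_sigma_finite_laplace[OF \<open>\<beta> > 0\<close>]]) measurable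
  also have "\<dots> \<le> (\<integral>\<^sup>+z. ennreal (exp (l * privacy_loss \<beta> A b r z k)) * M \<partial>laplace_noise \<beta> k)"
    unfolding M_def using assms by (intro nn_integral_mono nn_integral_exp_privacy_loss_fun_upd_le)
  also have "\<dots> = (\<integral>\<^sup>+z. ennreal (exp (l * privacy_loss \<beta> A b r z k)) \<partial>laplace_noise \<beta> k) * M"
    by (rule nn_integral_multc) measurable
  also have "\<dots> \<le> M ^ k * M"
    using Suc.IH unfolding M_def by (rule mult_right_mono) simp
  also have "\<dots> = M ^ Suc k"
    by (simp add: mult.commute)
  finally show ?case
    unfolding M_def .
qed

lemma one_le_exp_minus_add_exp_mult:
  fixes l \<epsilon> L :: real
  assumes "l > 0"
  shows "1 \<le> exp \<epsilon> * exp (- L) + exp (- l * \<epsilon>) / (exp 1 * l) * exp (l * L)"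
proof (cases "L \<le> \<epsilon>")
  case True
  then have "1 \<le> exp \<epsilon> * exp (- L)"
    by (simp add: mult_exp_exp)
  moreover have "0 \<le> exp (- l * \<epsilon>) / (exp 1 * l) * exp (l * L)"
    using assms by simp
  ultimately show ?thesis
    by linarith
next
  case False
  define u where "u = L - \<epsilon>"
  have "exp \<epsilon> * exp (- L) = exp (- u)"
    by (simp add: u_def mult_exp_exp)
  also have "\<dots> \<ge> 1 - u"
    using exp_ge_add_one_self[of "- u"] by simp
  finally have "exp \<epsilon> * exp (- L) \<ge> 1 - u" .
  moreover have "exp (l * u) / exp 1 \<ge> l * u"
    using exp_ge_add_one_self[of "l * u - 1"] by (simp add: exp_diff)
  then have "exp (- l * \<epsilon>) / (exp 1 * l) * exp (l * L) \<ge> u"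
    using assms by (simp add: u_def mult_exp_exp right_diff_distrib field_simps)
  ultimately show ?thesis
    by linarith
qed

lemma indicator_le_exp_mult_add_exp_mult:
  fixes l \<epsilon> L :: real
  assumes "l > 0"
  shows "(indicator S x :: ennreal)
      \<le> ennreal (exp \<epsilon>) * (indicator S x * ennreal (exp (- L))) + ennreal (exp (- l * \<epsilon>) / (exp 1 * l)) * ennreal (exp (l * L))"
  using one_le_exp_minus_add_exp_mult[OF assms, of \<epsilon> L] assms
  by (cases "x \<in> S") (auto simp: ennreal_mult[symmetric] ennreal_plus[symmetric] simp del: ennreal_plus intro!: ennreal_leI)

lemma sets_pair_laplace_noise: "sets (MR \<Otimes>\<^sub>M laplace_noise \<beta> k) = sets (MR \<Otimes>\<^sub>M histories k)"
  by (rule sets_pair_measure_cong) (simp_all add: sets_laplace_noise)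

lemma measurable_view_map:
  assumes "valid_adversary nb \<Delta> MR A"
  shows "(\<lambda>(r, z). (r, outs A b r z k)) \<in> measurable (MR \<Otimes>\<^sub>M laplace_noise \<beta> k) (MR \<Otimes>\<^sub>M histories k)"
  using measurable_outs[OF assms order_refl, where b = b]
  by (auto simp: split_beta' measurable_cong_sets[OF sets_pair_laplace_noise refl] intro!: measurable_Pair)

lemma prob_space_view:
  assumes "valid_adversary nb \<Delta> MR A" and "prob_space MR" and "\<beta> > 0"
  shows "prob_space (view (laplace \<beta>) MR A b k)"
  unfolding view_def
  by (intro prob_space.prob_space_distr prob_space_pair measurable_view_map[OF assms(1)] assms(2)
      prob_space_laplace_noise assms(3))

lemma emeasure_view:
  assumes "valid_adversary nb \<Delta> MR A" and "S \<in> sets (MR \<Otimes>\<^sub>M histories k)"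
  shows "emeasure (view (laplace \<beta>) MR A b k) S
       = (\<integral>\<^sup>+(r, z). indicator S (r, outs A b r z k) \<partial>(MR \<Otimes>\<^sub>M laplace_noise \<beta> k))"
proof -
  have "emeasure (view (laplace \<beta>) MR A b k) S = (\<integral>\<^sup>+x. indicator S x \<partial>view (laplace \<beta>) MR A b k)"
    using assms(2) by (simp add: view_def)
  also have "\<dots> = (\<integral>\<^sup>+\<omega>. indicator S ((\<lambda>(r, z). (r, outs A b r z k)) \<omega>) \<partial>(MR \<Otimes>\<^sub>M laplace_noise \<beta> k))"
    unfolding view_def using assms(2) by (intro nn_integral_distr measurable_view_map[OF assms(1)]) simp
  finally show ?thesis
    by (simp add: split_beta')
qed

lemma emeasure_view_flip_bit:
  assumes valid: "valid_adversary nb \<Delta> MR A" and "\<beta> > 0" and S: "S \<in> sets (MR \<Otimes>\<^sub>M histories k)"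
  shows "emeasure (view (laplace \<beta>) MR A (\<not> b) k) S
       = (\<integral>\<^sup>+(r, z). indicator S (r, outs A b r z k) * ennreal (exp (- privacy_loss \<beta> A b r z k))
            \<partial>(MR \<Otimes>\<^sub>M laplace_noise \<beta> k))"
proof -
  interpret noise: prob_space "laplace_noise \<beta> k"
    using \<open>\<beta> > 0\<close> by (rule prob_space_laplace_noise)
  have indicator_view [measurable]:
    "(\<lambda>(r, z). indicator S (r, outs A c r z k) :: ennreal) \<in> borel_measurable (MR \<Otimes>\<^sub>M laplace_noise \<beta> k)" for c
    using measurable_comp[OF measurable_view_map[OF valid] borel_measurable_indicator[OF S]]
    by (simp add: comp_def split_beta')
  note measurable_privacy_loss[OF valid order_refl, measurable]
  have "emeasure (view (laplace \<beta>) MR A (\<not> b) k) S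
      = (\<integral>\<^sup>+r. (\<integral>\<^sup>+z. indicator S (r, outs A (\<not> b) r z k) \<partial>laplace_noise \<beta> k) \<partial>MR)"
    unfolding emeasure_view[OF valid S] using noise.nn_integral_fst[OF indicator_view] by simp
  also have "\<dots> = (\<integral>\<^sup>+r. (\<integral>\<^sup>+z. indicator S (r, outs A b r z k) * ennreal (exp (- privacy_loss \<beta> A b r z k))
                     \<partial>laplace_noise \<beta> k) \<partial>MR)"
  proof (rule nn_integral_cong)
    fix r assume r: "r \<in> space MR"
    have "(\<lambda>h. indicator S (r, h) :: ennreal) \<in> borel_measurable (histories k)"
      using measurable_comp[OF measurable_Pair1'[OF r] borel_measurable_indicator[OF S]] by (simp add: comp_def)
    from nn_integral_outs_flip_bit[OF valid \<open>\<beta> > 0\<close> r this]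
    show "(\<integral>\<^sup>+z. indicator S (r, outs A (\<not> b) r z k) \<partial>laplace_noise \<beta> k)
        = (\<integral>\<^sup>+z. indicator S (r, outs A b r z k) * ennreal (exp (- privacy_loss \<beta> A b r z k)) \<partial>laplace_noise \<beta> k)" .
  qed
  also have "\<dots> = (\<integral>\<^sup>+(r, z). indicator S (r, outs A b r z k) * ennreal (exp (- privacy_loss \<beta> A b r z k))
                     \<partial>(MR \<Otimes>\<^sub>M laplace_noise \<beta> k))"
    using noise.nn_integral_fst[of "\<lambda>(r, z). indicator S (r, outs A b r z k) * ennreal (exp (- privacy_loss \<beta> A b r z k))"]
    by simp
  finally show ?thesis .
qed

lemma nn_integral_exp_privacy_loss_pair_le:
  assumes valid: "valid_adversary nb \<Delta> MR A" and "prob_space MR" and "\<beta> > 0"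
    and "\<Delta> / \<beta> \<le> 1" and "l > 0"
  shows "(\<integral>\<^sup>+(r, z). ennreal (exp (l * privacy_loss \<beta> A b r z k)) \<partial>(MR \<Otimes>\<^sub>M laplace_noise \<beta> k))
           \<le> ennreal (exp (l * (\<Delta> / \<beta>)\<^sup>2 + l\<^sup>2 * (\<Delta> / \<beta>)\<^sup>2 / 2)) ^ k"
proof -
  interpret MR: prob_space MR
    by (rule assms)
  interpret noise: prob_space "laplace_noise \<beta> k"
    using \<open>\<beta> > 0\<close> by (rule prob_space_laplace_noise)
  note measurable_privacy_loss[OF valid order_refl, measurable]
  have "(\<integral>\<^sup>+(r, z). ennreal (exp (l * privacy_loss \<beta> A b r z k)) \<partial>(MR \<Otimes>\<^sub>M laplace_noise \<beta> k))
      = (\<integral>\<^sup>+r. (\<integral>\<^sup>+z. ennreal (exp (l * privacy_loss \<beta> A b r z k)) \<partial>laplace_noise \<beta> k) \<partial>MR)"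
    using noise.nn_integral_fst[of "\<lambda>(r, z). ennreal (exp (l * privacy_loss \<beta> A b r z k))"] by simp
  also have "\<dots> \<le> (\<integral>\<^sup>+r. ennreal (exp (l * (\<Delta> / \<beta>)\<^sup>2 + l\<^sup>2 * (\<Delta> / \<beta>)\<^sup>2 / 2)) ^ k \<partial>MR)"
    using assms by (intro nn_integral_mono nn_integral_exp_privacy_loss_le) auto
  finally show ?thesis
    by (simp add: nn_integral_const MR.emeasure_space_1)
qed

lemma emeasure_view_le:
  assumes valid: "valid_adversary nb \<Delta> MR A" and "prob_space MR" and "\<beta> > 0"
    and "\<Delta> / \<beta> \<le> 1" and "l > 0" and S: "S \<in> sets (MR \<Otimes>\<^sub>M histories k)"
  shows "emeasure (view (laplace \<beta>) MR A b k) S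
      \<le> ennreal (exp \<epsilon>) * emeasure (view (laplace \<beta>) MR A (\<not> b) k) S
        + ennreal (exp (- l * \<epsilon>) / (exp 1 * l)) * ennreal (exp (l * (\<Delta> / \<beta>)\<^sup>2 + l\<^sup>2 * (\<Delta> / \<beta>)\<^sup>2 / 2)) ^ k"
proof -
  define I where "I = (\<lambda>(r, z). indicator S (r, outs A b r z k) :: ennreal)"
  define L where "L = (\<lambda>(r, z). privacy_loss \<beta> A b r z k)"
  define K where "K = ennreal (exp (- l * \<epsilon>) / (exp 1 * l))"
  have [measurable]: "I \<in> borel_measurable (MR \<Otimes>\<^sub>M laplace_noise \<beta> k)"
    using measurable_comp[OF measurable_view_map[OF valid] borel_measurable_indicator[OF S]]
    by (simp add: I_def comp_def split_beta')
  have [measurable]: "L \<in> borel_measurable (MR \<Otimes>\<^sub>M laplace_noise \<beta> k)"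
    using measurable_privacy_loss[OF valid order_refl]
    unfolding L_def by (simp add: measurable_cong_sets[OF sets_pair_laplace_noise refl])
  have reweighted: "(\<lambda>\<omega>. I \<omega> * ennreal (exp (- L \<omega>))) \<in> borel_measurable (MR \<Otimes>\<^sub>M laplace_noise \<beta> k)"
    by measurable
  have exponential: "(\<lambda>\<omega>. ennreal (exp (l * L \<omega>))) \<in> borel_measurable (MR \<Otimes>\<^sub>M laplace_noise \<beta> k)"
    by measurable
  have "I \<omega> \<le> ennreal (exp \<epsilon>) * (I \<omega> * ennreal (exp (- L \<omega>))) + K * ennreal (exp (l * L \<omega>))" for \<omega>
    unfolding I_def K_def split_beta' by (rule indicator_le_exp_mult_add_exp_mult[OF \<open>l > 0\<close>])
  then have "emeasure (view (laplace \<beta>) MR A b k) S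
      \<le> (\<integral>\<^sup>+\<omega>. ennreal (exp \<epsilon>) * (I \<omega> * ennreal (exp (- L \<omega>))) + K * ennreal (exp (l * L \<omega>))
            \<partial>(MR \<Otimes>\<^sub>M laplace_noise \<beta> k))"
    unfolding emeasure_view[OF valid S] I_def[symmetric] by (rule nn_integral_mono)
  also have "\<dots> = ennreal (exp \<epsilon>) * (\<integral>\<^sup>+\<omega>. I \<omega> * ennreal (exp (- L \<omega>)) \<partial>(MR \<Otimes>\<^sub>M laplace_noise \<beta> k))
      + K * (\<integral>\<^sup>+\<omega>. ennreal (exp (l * L \<omega>)) \<partial>(MR \<Otimes>\<^sub>M laplace_noise \<beta> k))"
    by (subst nn_integral_add) (measurable, simp only: nn_integral_cmult[OF reweighted] nn_integral_cmult[OF exponential])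
  also have "\<dots> \<le> ennreal (exp \<epsilon>) * emeasure (view (laplace \<beta>) MR A (\<not> b) k) S
      + K * ennreal (exp (l * (\<Delta> / \<beta>)\<^sup>2 + l\<^sup>2 * (\<Delta> / \<beta>)\<^sup>2 / 2)) ^ k"
    using emeasure_view_flip_bit[OF valid \<open>\<beta> > 0\<close> S] nn_integral_exp_privacy_loss_pair_le[OF assms(1-5)]
    unfolding I_def L_def by (intro add_mono mult_left_mono) (auto simp: split_beta')
  finally show ?thesis
    unfolding K_def .
qed

lemma measure_view_le:
  assumes valid: "valid_adversary nb \<Delta> MR A" and "prob_space MR" and "\<beta> > 0"
    and "\<Delta> / \<beta> \<le> 1" and "l > 0" and S: "S \<in> sets (MR \<Otimes>\<^sub>M histories k)"
    and tail: "exp (- l * \<epsilon>) / (exp 1 * l) * exp (l * (\<Delta> / \<beta>)\<^sup>2 + l\<^sup>2 * (\<Delta> / \<beta>)\<^sup>2 / 2) ^ k \<le> \<delta>"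
  shows "measure (view (laplace \<beta>) MR A b k) S \<le> exp \<epsilon> * measure (view (laplace \<beta>) MR A (\<not> b) k) S + \<delta>"
proof -
  interpret P: prob_space "view (laplace \<beta>) MR A b k"
    using assms(1-3) by (rule prob_space_view)
  interpret Q: prob_space "view (laplace \<beta>) MR A (\<not> b) k"
    using assms(1-3) by (rule prob_space_view)
  define K where "K = exp (- l * \<epsilon>) / (exp 1 * l)"
  define M where "M = exp (l * (\<Delta> / \<beta>)\<^sup>2 + l\<^sup>2 * (\<Delta> / \<beta>)\<^sup>2 / 2)"
  have "0 \<le> K"
    using \<open>l > 0\<close> by (simp add: K_def)
  then have "0 \<le> K * M ^ k"
    by (simp add: M_def)
  then have "0 \<le> \<delta>"
    using tail unfolding K_def M_def by linarith
  have "ennreal K * ennreal M ^ k = ennreal (K * M ^ k)"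
    using \<open>0 \<le> K\<close> by (simp add: ennreal_power ennreal_mult M_def)
  also have "\<dots> \<le> ennreal \<delta>"
    using tail by (intro ennreal_leI) (simp add: K_def M_def)
  finally have "ennreal (measure (view (laplace \<beta>) MR A b k) S)
      \<le> ennreal (exp \<epsilon>) * ennreal (measure (view (laplace \<beta>) MR A (\<not> b) k) S) + ennreal \<delta>"
    using emeasure_view_le[OF assms(1-6), of b \<epsilon>] unfolding K_def[symmetric] M_def[symmetric]
    by (auto simp: P.emeasure_eq_measure Q.emeasure_eq_measure elim!: order_trans intro!: add_left_mono)
  then show ?thesis
    using \<open>0 \<le> \<delta>\<close> by (simp add: ennreal_mult[symmetric] ennreal_plus[symmetric] ennreal_le_iff del: ennreal_plus)
qed

lemma adaptive_dp_laplace: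
  assumes "\<beta> > 0" and "\<Delta> / \<beta> \<le> 1" and "l > 0"
    and "exp (- l * \<epsilon>) / (exp 1 * l) * exp (l * (\<Delta> / \<beta>)\<^sup>2 + l\<^sup>2 * (\<Delta> / \<beta>)\<^sup>2 / 2) ^ k \<le> \<delta>"
  shows "adaptive_dp nb \<Delta> (laplace \<beta>) k \<epsilon> \<delta> TYPE('r)"
  unfolding adaptive_dp_def
  using measure_view_le[OF _ _ assms(1-3) _ assms(4), of nb _ _ _ False]
    measure_view_le[OF _ _ assms(1-3) _ assms(4), of nb _ _ _ True]
  by auto

lemma one_le_ln_exp_one_add:
  fixes y :: real
  assumes "0 \<le> y"
  shows "1 \<le> ln (exp 1 + y)"
proof -
  have "ln (exp 1) \<le> ln (exp 1 + y)"
    using assms by (intro ln_mono) auto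
  then show ?thesis
    by simp
qed

lemma calibrated_tail_le:
  fixes \<epsilon> \<delta> :: real
  assumes "0 < \<epsilon>" and "\<epsilon> \<le> 1" and "0 < \<delta>"
  defines "L \<equiv> ln (exp 1 + \<epsilon> / \<delta>)"
  shows "\<epsilon> * exp (\<epsilon> - 2 * L) / (4 * exp 1 * L) \<le> \<delta>"
proof -
  define x where "x = \<epsilon> / \<delta>"
  have "x > 0"
    using assms by (simp add: x_def)
  then have "exp 1 + x > 0"
    by (simp add: add_pos_pos)
  then have exp_L: "exp L = exp 1 + x"
    by (simp add: L_def x_def)
  have "L \<ge> 1"
    unfolding L_def using assms by (intro one_le_ln_exp_one_add) simp
  have "exp (2 * L) = (exp L)\<^sup>2"
    using exp_of_nat_mult[of 2 L] by simp
  then have "exp (\<epsilon> - 2 * L) = exp \<epsilon> / (exp 1 + x)\<^sup>2"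
    by (simp add: exp_diff exp_L)
  then have "\<epsilon> * exp (\<epsilon> - 2 * L) / (4 * exp 1 * L) = \<epsilon> * exp \<epsilon> / (4 * exp 1 * L * (exp 1 + x)\<^sup>2)"
    by simp
  also have "\<dots> \<le> \<epsilon> * exp 1 / (4 * exp 1 * 1 * (exp 1 + x)\<^sup>2)"
  proof (rule frac_le)
    show "\<epsilon> * exp \<epsilon> \<le> \<epsilon> * exp 1"
      using assms by simp
    show "4 * exp 1 * 1 * (exp 1 + x)\<^sup>2 \<le> 4 * exp 1 * L * (exp 1 + x)\<^sup>2"
      using \<open>L \<ge> 1\<close> by (intro mult_right_mono mult_left_mono) auto
  qed (use assms \<open>x > 0\<close> \<open>exp 1 + x > 0\<close> in simp_all)
  also have "\<dots> \<le> \<epsilon> / (4 * x)"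
  proof -
    have "x \<le> exp 1 + x" and "1 \<le> exp 1 + x"
      using \<open>x > 0\<close> by (auto intro: add_increasing2)
    then have "x * 1 \<le> (exp 1 + x) * (exp 1 + x)"
      using \<open>exp 1 + x > 0\<close> by (intro mult_mono) auto
    then show ?thesis
      using assms \<open>x > 0\<close> by (simp add: divide_left_mono power2_eq_square)
  qed
  also have "\<dots> \<le> \<delta>"
    using assms by (simp add: x_def)
  finally show ?thesis .
qed

lemma laplace_calibration:
  fixes \<Delta> \<epsilon> \<delta> :: real and k :: nat
  assumes "\<Delta> > 0" and "0 < \<epsilon>" and "\<epsilon> \<le> 1" and "0 < \<delta>" and "k \<ge> 1"
  defines "L \<equiv> ln (exp 1 + \<epsilon> / \<delta>)"
  defines "\<beta> \<equiv> sqrt ((8 * real k * \<Delta>\<^sup>2 * L / \<epsilon>\<^sup>2) / 2)"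
  defines "l \<equiv> 4 * L / \<epsilon>"
  shows "\<beta> > 0" and "\<Delta> / \<beta> \<le> 1" and "l > 0"
    and "exp (- l * \<epsilon>) / (exp 1 * l) * exp (l * (\<Delta> / \<beta>)\<^sup>2 + l\<^sup>2 * (\<Delta> / \<beta>)\<^sup>2 / 2) ^ k \<le> \<delta>"
proof -
  have "L \<ge> 1"
    unfolding L_def using assms by (intro one_le_ln_exp_one_add) simp
  have "real k \<ge> 1"
    using assms by simp
  have \<beta>_sq: "\<beta>\<^sup>2 = 4 * real k * \<Delta>\<^sup>2 * L / \<epsilon>\<^sup>2"
    using \<open>L \<ge> 1\<close> by (simp add: \<beta>_def)
  show "\<beta> > 0"
    using assms \<open>L \<ge> 1\<close> \<open>real k \<ge> 1\<close> by (simp add: \<beta>_def)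
  then have c_sq: "(\<Delta> / \<beta>)\<^sup>2 = \<epsilon>\<^sup>2 / (4 * real k * L)"
    using assms \<open>L \<ge> 1\<close> \<open>real k \<ge> 1\<close> by (simp add: power_divide \<beta>_sq field_simps)
  have "\<epsilon>\<^sup>2 \<le> 1"
    using assms by (simp add: power_le_one)
  moreover have "1 \<le> real k * L"
    using mult_mono[OF \<open>real k \<ge> 1\<close> \<open>L \<ge> 1\<close>] by simp
  ultimately have "(\<Delta> / \<beta>)\<^sup>2 \<le> 1"
    unfolding c_sq by (simp add: mult.assoc)
  then show "\<Delta> / \<beta> \<le> 1"
    using power2_le_imp_le[of "\<Delta> / \<beta>" 1] by simp
  show "l > 0"
    using \<open>L \<ge> 1\<close> assms by (simp add: l_def)
  have "real k * (l * (\<Delta> / \<beta>)\<^sup>2 + l\<^sup>2 * (\<Delta> / \<beta>)\<^sup>2 / 2) = \<epsilon> + 2 * L"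
    unfolding c_sq l_def using assms \<open>L \<ge> 1\<close> \<open>real k \<ge> 1\<close> by (simp add: field_simps power2_eq_square)
  then have "exp (- l * \<epsilon>) / (exp 1 * l) * exp (l * (\<Delta> / \<beta>)\<^sup>2 + l\<^sup>2 * (\<Delta> / \<beta>)\<^sup>2 / 2) ^ k
      = \<epsilon> * exp (\<epsilon> - 2 * L) / (4 * exp 1 * L)"
    using assms by (simp add: exp_of_nat_mult[symmetric] mult_exp_exp l_def field_simps)
  also have "\<dots> \<le> \<delta>"
    unfolding L_def using assms(2-4) by (rule calibrated_tail_le)
  finally show "exp (- l * \<epsilon>) / (exp 1 * l) * exp (l * (\<Delta> / \<beta>)\<^sup>2 + l\<^sup>2 * (\<Delta> / \<beta>)\<^sup>2 / 2) ^ k \<le> \<delta>" .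
qed

lemma nn_integral_laplace_noise_sum_square:
  assumes "\<beta> > 0"
  shows "(\<integral>\<^sup>+z. ennreal (\<Sum>i<k. (z i)\<^sup>2) \<partial>laplace_noise \<beta> k) = ennreal (2 * \<beta>\<^sup>2 * real k)"
proof -
  have component: "(\<lambda>z. z i) \<in> measurable (laplace_noise \<beta> k) (laplace \<beta>)" if "i < k" for i
    using that by (intro measurable_component_singleton) auto
  have "(\<integral>\<^sup>+z. ennreal ((z i)\<^sup>2) \<partial>laplace_noise \<beta> k) = ennreal (2 * \<beta>\<^sup>2)" if "i < k" for i
  proof -
    have "(\<integral>\<^sup>+z. ennreal ((z i)\<^sup>2) \<partial>laplace_noise \<beta> k)
        = (\<integral>\<^sup>+x. ennreal (\<bar>x\<bar> ^ 2) \<partial>distr (laplace_noise \<beta> k) (laplace \<beta>) (\<lambda>z. z i))"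
      using component[OF that] by (subst nn_integral_distr) auto
    also have "distr (laplace_noise \<beta> k) (laplace \<beta>) (\<lambda>z. z i) = laplace \<beta>"
      using that \<open>\<beta> > 0\<close> by (intro distr_PiM_component prob_space_laplace) auto
    finally show ?thesis
      using nn_integral_laplace_abs_power[OF \<open>\<beta> > 0\<close>, of 2] by simp
  qed
  moreover have "(\<lambda>z. ennreal ((z i)\<^sup>2)) \<in> borel_measurable (laplace_noise \<beta> k)" if "i < k" for i
  proof -
    have "(\<lambda>x. ennreal (x\<^sup>2)) \<in> borel_measurable (laplace \<beta>)"
      by measurable
    from measurable_compose[OF component[OF that] this] show ?thesis .
  qed
  ultimately show ?thesis
    by (simp add: sum_ennreal[symmetric] nn_integral_sum ennreal_of_nat_eq_real_of_nat ennreal_mult'' mult.commute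
        del: sum_ennreal)
qed

lemma comp_mse_laplace:
  assumes "prob_space MR" and "\<beta> > 0"
  shows "comp_mse (laplace \<beta>) MR A b k = ennreal (2 * \<beta>\<^sup>2 * real k)"
proof -
  interpret MR: prob_space MR
    by (rule assms)
  interpret noise: prob_space "laplace_noise \<beta> k"
    using \<open>\<beta> > 0\<close> by (rule prob_space_laplace_noise)
  have sum_outs: "(\<Sum>i<k. (outs A b r z k i - chosen_val (A i r (outs A b r z i)) b)\<^sup>2) = (\<Sum>i<k. (z i)\<^sup>2)" for r z
    by (simp add: outs_nth)
  have "(\<lambda>(r, z). ennreal (\<Sum>i<k. (z i)\<^sup>2)) \<in> borel_measurable (MR \<Otimes>\<^sub>M laplace_noise \<beta> k)"
    by (simp add: measurable_cong_sets[OF sets_pair_laplace_noise refl] split_beta')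
  from noise.nn_integral_fst[OF this]
  have "comp_mse (laplace \<beta>) MR A b k = (\<integral>\<^sup>+r. (\<integral>\<^sup>+z. ennreal (\<Sum>i<k. (z i)\<^sup>2) \<partial>laplace_noise \<beta> k) \<partial>MR)"
    by (simp add: comp_mse_def sum_outs)
  also have "\<dots> = ennreal (2 * \<beta>\<^sup>2 * real k)"
    using \<open>\<beta> > 0\<close> by (simp add: nn_integral_laplace_noise_sum_square MR.emeasure_space_1)
  finally show ?thesis .
qed

lemma adaptive_dp_laplace_calibrated:
  assumes "\<Delta> > 0" and "0 < \<epsilon>" and "\<epsilon> \<le> 1" and "0 < \<delta>" and "k \<ge> 1"
  shows "adaptive_dp nb \<Delta> (laplace (sqrt ((8 * real k * \<Delta>\<^sup>2 * ln (exp 1 + \<epsilon> / \<delta>) / \<epsilon>\<^sup>2) / 2)))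
           k \<epsilon> \<delta> TYPE('r)"
  by (rule adaptive_dp_laplace[OF laplace_calibration[OF assms]])

lemma comp_mse_laplace_calibrated:
  assumes "prob_space MR" and "\<Delta> > 0" and "0 < \<epsilon>" and "\<epsilon> \<le> 1" and "0 < \<delta>" and "k \<ge> 1"
  shows "comp_mse (laplace (sqrt ((8 * real k * \<Delta>\<^sup>2 * ln (exp 1 + \<epsilon> / \<delta>) / \<epsilon>\<^sup>2) / 2))) MR A b k
       = ennreal (8 * real k ^ 2 * \<Delta>\<^sup>2 * ln (exp 1 + \<epsilon> / \<delta>) / \<epsilon>\<^sup>2)"
proof -
  define \<beta> where "\<beta> = sqrt ((8 * real k * \<Delta>\<^sup>2 * ln (exp 1 + \<epsilon> / \<delta>) / \<epsilon>\<^sup>2) / 2)"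
  have "ln (exp 1 + \<epsilon> / \<delta>) \<ge> 0"
    using one_le_ln_exp_one_add[of "\<epsilon> / \<delta>"] assms by simp
  then have \<beta>_sq: "\<beta>\<^sup>2 = 4 * real k * \<Delta>\<^sup>2 * ln (exp 1 + \<epsilon> / \<delta>) / \<epsilon>\<^sup>2"
    by (simp add: \<beta>_def)
  have "comp_mse (laplace \<beta>) MR A b k = ennreal (2 * \<beta>\<^sup>2 * real k)"
    unfolding \<beta>_def using assms by (intro comp_mse_laplace laplace_calibration(1))
  also have "2 * \<beta>\<^sup>2 * real k = 8 * real k ^ 2 * \<Delta>\<^sup>2 * ln (exp 1 + \<epsilon> / \<delta>) / \<epsilon>\<^sup>2"
    unfolding \<beta>_sq by (simp add: power2_eq_square)
  finally show ?thesis
    unfolding \<beta>_def .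
qed

theorem corollary3:
  fixes nb :: "'db \<Rightarrow> 'db \<Rightarrow> bool"
  assumes "symp nb"
  shows "(\<forall>(\<Delta>::real) (\<epsilon>::real) (\<delta>::real) (k::nat).
            \<Delta> > 0 \<and> 0 < \<epsilon> \<and> \<epsilon> \<le> 9/10 \<and> 0 < \<delta> \<and> \<delta> \<le> 1 \<and> k \<ge> 1 \<longrightarrow>
            adaptive_dp nb \<Delta>
              (laplace (sqrt ((8 * real k * \<Delta>\<^sup>2 * ln (exp 1 + \<epsilon> / \<delta>) / \<epsilon>\<^sup>2) / 2)))
              k \<epsilon> \<delta> TYPE('r))
       \<and> (\<exists>C::real. \<forall>(\<Delta>::real) (\<epsilon>::real) (\<delta>::real) (k::nat).
            \<Delta> > 0 \<and> 0 < \<epsilon> \<and> \<epsilon> \<le> 9/10 \<and> 0 < \<delta> \<and> \<delta> \<le> 1 \<and> k \<ge> 1 \<longrightarrow>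
            (\<forall>(MR::'r measure) (A :: ('r, 'db) adversary) b.
               prob_space MR \<and> valid_adversary nb \<Delta> MR A \<longrightarrow>
               comp_mse (laplace (sqrt ((8 * real k * \<Delta>\<^sup>2 * ln (exp 1 + \<epsilon> / \<delta>) / \<epsilon>\<^sup>2) / 2)))
                 MR A b k
               \<le> ennreal (C * real k ^ 2 * \<Delta>\<^sup>2 * ln (exp 1 + \<epsilon> / \<delta>) / \<epsilon>\<^sup>2)))"
proof (intro conjI allI impI exI[of _ 8])
  fix \<Delta> \<epsilon> \<delta> :: real and k :: nat and MR :: "'r measure" and A :: "('r, 'db) adversary" and b
  assume "\<Delta> > 0 \<and> 0 < \<epsilon> \<and> \<epsilon> \<le> 9/10 \<and> 0 < \<delta> \<and> \<delta> \<le> 1 \<and> k \<ge> 1"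
    and "prob_space MR \<and> valid_adversary nb \<Delta> MR A"
  then show "comp_mse (laplace (sqrt ((8 * real k * \<Delta>\<^sup>2 * ln (exp 1 + \<epsilon> / \<delta>) / \<epsilon>\<^sup>2) / 2))) MR A b k
      \<le> ennreal (8 * real k ^ 2 * \<Delta>\<^sup>2 * ln (exp 1 + \<epsilon> / \<delta>) / \<epsilon>\<^sup>2)"
    by (subst comp_mse_laplace_calibrated) auto
qed (rule adaptive_dp_laplace_calibrated; auto)

end
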